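(* Let $\mathbb{F}$ be a field of characteristic $2$. Every triangle in $\widetilde H_3(\mathbb{F})$ has voltage $U$ with respect to $\ell$; i.e. for pairwise adjacent vertices $a,b,c$ we have $\ell(a,b)+\ell(b,c)+\ell(c,a)=U$.
   Context: Let $V=\mathbb{F}^4$, $V^*$ its dual. $\widetilde H_3(\mathbb{F})$ is the graph whose vertices are tensors $v\otimes f\in V\otimes V^*$ with $f(v)\neq0$, with $v\otimes f\perp w\otimes g$ iff $f(w)=g(v)=0$. Let $W=\bigwedge^2V$, fix an isomorphism $\chi:\bigwedge^4V\to\mathbb{F}$, identify $\bigwedge^2V^*$ with $(\bigwedge^2V)^*$ via $(f_1\wedge f_2)(v_1\wedge v_2)=f_1(v_1)f_2(v_2)-f_1(v_2)f_2(v_1)$, let $\psi:\bigwedge^2V\to\bigwedge^2V^*$ be $\psi(\hat w)(\hat v)=\chi(\hat v\wedge\hat w)$ and $\phi=\psi^{-1}$. $S_2(W)$ is the symmetric square of $W$ (product $ab$). $U=(w\wedge x)(y\wedge z)+(w\wedge y)(z\wedge x)+(w\wedge z)(x\wedge y)\in S_2(W)$ for any $w,x,y,z\in V$ with $\chi(w\wedge x\wedge y\wedge z)=1$ (independent of the choice). $\ell$ assigns to the dart from $v_1\otimes h_1$ to $v_2\otimes h_2$ the element $h_1(v_1)^{-1}h_2(v_2)^{-1}(v_1\wedge v_2)\,\phi(h_1\wedge h_2)$ of $S_2(W)$; the voltage of a closed walk is the sum of the voltages of its darts. *)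

theory Defs
  imports "HOL-Analysis.Finite_Cartesian_Product" "HOL-Library.Numeral_Type"
begin

text \<open>V = F^4 is the type 'f^4, V* is also 'f^4 with the
standard pairing.  An element of W = wedge^2 V (and of wedge^2 V*) is represented
by its alternating coordinate matrix: v wedge w has (i,j) entry v_i w_j - v_j w_i.\<close>

definition pairing :: "'f::field ^ 4 \<Rightarrow> 'f ^ 4 \<Rightarrow> 'f" where
  "pairing f v = (\<Sum>i\<in>UNIV. f $ i * v $ i)"

definition wedge :: "'f::field ^ 4 \<Rightarrow> 'f ^ 4 \<Rightarrow> 'f ^ 4 ^ 4" where
  "wedge v w = (\<chi> i j. v $ i * w $ j - v $ j * w $ i)"

definition alternating :: "'f::field ^ 4 ^ 4 \<Rightarrow> bool" where
  "alternating A \<longleftrightarrow> (\<forall>i j. A $ i $ j = - A $ j $ i) \<and> (\<forall>i. A $ i $ i = 0)"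

text \<open>The pairing of wedge^2 V* with wedge^2 V, in coordinates (Cauchy--Binet);
it satisfies (f1 wedge f2)(v1 wedge v2) = f1(v1) f2(v2) - f1(v2) f2(v1).\<close>
definition pair2 :: "'f::field ^ 4 ^ 4 \<Rightarrow> 'f ^ 4 ^ 4 \<Rightarrow> 'f" where
  "pair2 A X = (\<Sum>(i,j)\<in>{(i,j). i < j}. A $ i $ j * X $ i $ j)"

text \<open>Coefficient of e0 wedge e1 wedge e2 wedge e3 in X wedge Y, for 2-vectors X, Y.\<close>
definition wedge22 :: "'f::field ^ 4 ^ 4 \<Rightarrow> 'f ^ 4 ^ 4 \<Rightarrow> 'f" where
  "wedge22 X Y =
     X$0$1 * Y$2$3 - X$0$2 * Y$1$3 + X$0$3 * Y$1$2
   + X$1$2 * Y$0$3 - X$1$3 * Y$0$2 + X$2$3 * Y$0$1"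

text \<open>An isomorphism chi: wedge^4 V -> F is multiplication of that coefficient by a
nonzero constant c.  chi applied to X wedge Y:\<close>
definition chi2 :: "'f::field \<Rightarrow> 'f ^ 4 ^ 4 \<Rightarrow> 'f ^ 4 ^ 4 \<Rightarrow> 'f" where
  "chi2 c X Y = c * wedge22 X Y"

text \<open>phi = psi^{-1}, where psi(B)(X) = chi(X wedge B).\<close>
definition phi :: "'f::field \<Rightarrow> 'f ^ 4 ^ 4 \<Rightarrow> 'f ^ 4 ^ 4" where
  "phi c \<alpha> = (THE B. alternating B \<and> (\<forall>X. alternating X \<longrightarrow> chi2 c X B = pair2 \<alpha> X))"

text \<open>S_2(W): degree-2 monomials in the basis e_i wedge e_j (i<j) of W.  An element is
a function C on pairs of basis indices, C p q = coefficient of the monomial p*q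
(C p p = coefficient of p^2), symmetric, and zero off the basis indices.\<close>
type_synonym 'f s2 = "(4 \<times> 4) \<Rightarrow> (4 \<times> 4) \<Rightarrow> 'f"

definition wbasis :: "(4 \<times> 4) set" where
  "wbasis = {(i,j). i < j}"

definition s2mul :: "'f::field ^ 4 ^ 4 \<Rightarrow> 'f ^ 4 ^ 4 \<Rightarrow> 'f s2" where
  "s2mul a b = (\<lambda>p q. if p \<in> wbasis \<and> q \<in> wbasis then
       (if p = q then a $ fst p $ snd p * b $ fst p $ snd p
        else a $ fst p $ snd p * b $ fst q $ snd q + a $ fst q $ snd q * b $ fst p $ snd p)
     else 0)"

definition s2add :: "'f::field s2 \<Rightarrow> 'f s2 \<Rightarrow> 'f s2" where
  "s2add x y = (\<lambda>p q. x p q + y p q)"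

definition s2scale :: "'f::field \<Rightarrow> 'f s2 \<Rightarrow> 'f s2" where
  "s2scale k x = (\<lambda>p q. k * x p q)"

text \<open>Vertices of H3~: represented by pairs (v,f) with f(v) nonzero (standing for v (x) f).\<close>
definition is_vertex :: "('f::field ^ 4) \<times> ('f ^ 4) \<Rightarrow> bool" where
  "is_vertex a \<longleftrightarrow> pairing (snd a) (fst a) \<noteq> 0"

definition adj :: "('f::field ^ 4) \<times> ('f ^ 4) \<Rightarrow> ('f ^ 4) \<times> ('f ^ 4) \<Rightarrow> bool" where
  "adj a b \<longleftrightarrow> pairing (snd a) (fst b) = 0 \<and> pairing (snd b) (fst a) = 0"

definition ell :: "'f::field \<Rightarrow> ('f ^ 4) \<times> ('f ^ 4) \<Rightarrow> ('f ^ 4) \<times> ('f ^ 4) \<Rightarrow> 'f s2" where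
  "ell c a b = s2scale (inverse (pairing (snd a) (fst a)) * inverse (pairing (snd b) (fst b)))
      (s2mul (wedge (fst a) (fst b)) (phi c (wedge (snd a) (snd b))))"

definition Uelt :: "'f::field ^ 4 \<Rightarrow> 'f ^ 4 \<Rightarrow> 'f ^ 4 \<Rightarrow> 'f ^ 4 \<Rightarrow> 'f s2" where
  "Uelt w x y z = s2add (s2add (s2mul (wedge w x) (wedge y z)) (s2mul (wedge w y) (wedge z x)))
      (s2mul (wedge w z) (wedge x y))"

end

theory Submission
  imports Defs "HOL-Analysis.Cartesian_Space"
begin

(* Let the triangle have vertices v_i (x) h_i, so that h_i(v_j) = 0 for i <> j.  Let K in V be
   the vector dual to h1 /\ h2 /\ h3.  Because h1 and h2 both vanish at v3, phi(h1 /\ h2) is a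
   multiple of K /\ v3, namely (K /\ v3) / (c h3(v3)); cyclically for the other two edges.  The
   voltage is therefore U(K, v3, v1, v2) / (c h1(v1) h2(v2) h3(v3)).  Every U(w, x, y, z) is the
   coefficient of w /\ x /\ y /\ z times U(e0, e1, e2, e3), and the coefficient of
   K /\ v3 /\ v1 /\ v2 is the determinant of (h_i(v_j)), which is diagonal.  Both sides thus
   equal U(e0, e1, e2, e3) / c. *)

(* The library enumerates the type 4 as 1, 2, 3, 4, whereas the definitions index from 0, and
   algebra treats v $ 4 and v $ 0 as unrelated atoms. *)
lemma exhaust_4_from_0: "(x::4) = 0 \<or> x = 1 \<or> x = 2 \<or> x = 3"
proof -
  have "(4::4) = 0" by simp
  then show ?thesis using exhaust_4[of x] by argo
qed

lemma forall_4_from_0: "(\<forall>i::4. P i) \<longleftrightarrow> P 0 \<and> P 1 \<and> P 2 \<and> P 3"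
  by (metis exhaust_4_from_0)

lemma sum_4_from_0: "sum f (UNIV::4 set) = f 0 + f 1 + f 2 + f 3"
proof -
  have UNIV_4_from_0: "(UNIV::4 set) = {0, 1, 2, 3}"
    using exhaust_4_from_0 by auto
  show ?thesis unfolding UNIV_4_from_0 by (simp add: ac_simps)
qed

lemma less_4_iff: "(i::4) < j \<longleftrightarrow> (i,j) \<in> {(0,1),(0,2),(0,3),(1,2),(1,3),(2,3)}"
  using exhaust_4_from_0[of i] exhaust_4_from_0[of j]
  by (elim disjE) (simp_all add: less_bit0_def bit0.Rep_numeral bit0.Rep_0 bit0.Rep_1)

lemma wbasis_eq: "wbasis = {(0,1),(0,2),(0,3),(1,2),(1,3),(2,3)}"
  unfolding wbasis_def less_4_iff by auto

lemma pair2_eq: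
  "pair2 A X = A$0$1*X$0$1 + A$0$2*X$0$2 + A$0$3*X$0$3 + A$1$2*X$1$2 + A$1$3*X$1$3 + A$2$3*X$2$3"
  unfolding pair2_def wbasis_def[symmetric] wbasis_eq by (simp add: ac_simps)

definition Uelt_std :: "'f::field s2" where
  "Uelt_std = Uelt (axis 0 1) (axis 1 1) (axis 2 1) (axis 3 1)"

lemma Uelt_eq_std: "Uelt w x y z = s2scale (wedge22 (wedge w x) (wedge y z)) Uelt_std"
proof (intro ext)
  fix p q :: "4 \<times> 4"
  have "\<forall>p\<in>wbasis. \<forall>q\<in>wbasis.
      Uelt w x y z p q = s2scale (wedge22 (wedge w x) (wedge y z)) Uelt_std p q"
    unfolding wbasis_eq
    by (simp add: Uelt_def Uelt_std_def s2add_def s2scale_def s2mul_def wedge_def wedge22_def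
        axis_def wbasis_eq; intro conjI; algebra)
  then show "Uelt w x y z p q = s2scale (wedge22 (wedge w x) (wedge y z)) Uelt_std p q"
    by (cases "p \<in> wbasis \<and> q \<in> wbasis")
      (auto simp: Uelt_def Uelt_std_def s2add_def s2scale_def s2mul_def)
qed

lemma Uelt_eq_std_if_chi2:
  assumes "chi2 c (wedge w x) (wedge y z) = 1"
  shows "Uelt w x y z = s2scale (inverse c) Uelt_std"
proof -
  have "wedge22 (wedge w x) (wedge y z) = inverse c"
    using assms unfolding chi2_def by (simp add: inverse_unique)
  then show ?thesis by (simp add: Uelt_eq_std)
qed

(* Entry (i, j) is the signed entry at the complementary index pair: this is psi^-1 for the
   volume coefficient wedge22, i.e. for chi with c = 1. *)
definition hodge :: "'f::field ^ 4 ^ 4 \<Rightarrow> 'f ^ 4 ^ 4" where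
  "hodge A = (\<chi> i j.
     if i = 0 \<and> j = 1 then A$2$3 else if i = 1 \<and> j = 0 then - A$2$3
     else if i = 0 \<and> j = 2 then - A$1$3 else if i = 2 \<and> j = 0 then A$1$3
     else if i = 0 \<and> j = 3 then A$1$2 else if i = 3 \<and> j = 0 then - A$1$2
     else if i = 1 \<and> j = 2 then A$0$3 else if i = 2 \<and> j = 1 then - A$0$3
     else if i = 1 \<and> j = 3 then - A$0$2 else if i = 3 \<and> j = 1 then A$0$2
     else if i = 2 \<and> j = 3 then A$0$1 else if i = 3 \<and> j = 2 then - A$0$1
     else 0)"

lemma phi_eq_hodge:
  fixes c :: "'f::field"
  assumes "c \<noteq> 0"
  shows "phi c A = (\<chi> i j. inverse c * hodge A $ i $ j)"
  unfolding phi_def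
proof (rule the_equality)
  show "alternating (\<chi> i j. inverse c * hodge A $ i $ j) \<and>
    (\<forall>X. alternating X \<longrightarrow> chi2 c X (\<chi> i j. inverse c * hodge A $ i $ j) = pair2 A X)"
  proof
    show "alternating (\<chi> i j. inverse c * hodge A $ i $ j)"
      unfolding alternating_def hodge_def forall_4_from_0 by simp
    show "\<forall>X. alternating X \<longrightarrow> chi2 c X (\<chi> i j. inverse c * hodge A $ i $ j) = pair2 A X"
      using assms by (simp add: chi2_def wedge22_def hodge_def pair2_eq field_simps)
  qed
next
  fix B
  assume B: "alternating B \<and> (\<forall>X. alternating X \<longrightarrow> chi2 c X B = pair2 A X)"
  have "c * wedge22 (wedge (axis i 1) (axis j 1)) B = pair2 A (wedge (axis i 1) (axis j 1))" for i j
    using B unfolding chi2_def alternating_def wedge_def by auto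
  from this[of 0 1] this[of 0 2] this[of 0 3] this[of 1 2] this[of 1 3] this[of 2 3]
  have coeffs: "c * B$2$3 = A$0$1" "- (c * B$1$3) = A$0$2" "c * B$1$2 = A$0$3"
     "c * B$0$3 = A$1$2" "- (c * B$0$2) = A$1$3" "c * B$0$1 = A$2$3"
    by (simp_all add: wedge22_def pair2_eq wedge_def axis_def)
  have alt: "B$i$j = - B$j$i" "B$i$i = 0" for i j
    using B unfolding alternating_def by blast+
  have "B$i$j = inverse c * hodge A $ i $ j" for i j
    using exhaust_4_from_0[of i] exhaust_4_from_0[of j] coeffs alt(1)[of i j] alt(2)[of i] assms
    by (elim disjE) (auto simp: hodge_def field_simps)
  then show "B = (\<chi> i j. inverse c * hodge A $ i $ j)"
    by (simp add: vec_eq_iff)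
qed

definition minor3 :: "'f::field ^ 4 \<Rightarrow> 'f ^ 4 \<Rightarrow> 'f ^ 4 \<Rightarrow> 4 \<Rightarrow> 4 \<Rightarrow> 4 \<Rightarrow> 'f" where
  "minor3 a b c i j k =
     a$i * (b$j * c$k - b$k * c$j) - a$j * (b$i * c$k - b$k * c$i) + a$k * (b$i * c$j - b$j * c$i)"

(* gcross h1 h2 h3 is the vector of V dual to h1 /\ h2 /\ h3 in wedge^3 V*: its entries are the
   signed 3 x 3 minors of the matrix with rows h1, h2, h3. *)
definition gcross :: "'f::field ^ 4 \<Rightarrow> 'f ^ 4 \<Rightarrow> 'f ^ 4 \<Rightarrow> 'f ^ 4" where
  "gcross a b c = (\<chi> l. if l = 0 then minor3 a b c 1 2 3 else if l = 1 then - minor3 a b c 0 2 3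
      else if l = 2 then minor3 a b c 0 1 3 else - minor3 a b c 0 1 2)"

lemma gcross_cycle: "gcross b c a = gcross a b c"
  unfolding vec_eq_iff forall_4_from_0 gcross_def minor3_def by (simp; algebra)

lemma hodge_wedge_expansion:
  "pairing h3 v * hodge (wedge h1 h2) $i$j - pairing h2 v * hodge (wedge h1 h3) $i$j
     + pairing h1 v * hodge (wedge h2 h3) $i$j = wedge (gcross h1 h2 h3) v $i$j"
proof -
  have "\<forall>i j. pairing h3 v * hodge (wedge h1 h2) $i$j - pairing h2 v * hodge (wedge h1 h3) $i$j
     + pairing h1 v * hodge (wedge h2 h3) $i$j = wedge (gcross h1 h2 h3) v $i$j"
    unfolding forall_4_from_0
    by (simp add: pairing_def sum_4_from_0 hodge_def wedge_def gcross_def minor3_def;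
        intro conjI; algebra)
  then show ?thesis by blast
qed

lemma phi_wedge_eq_gcross:
  assumes "c \<noteq> 0" "pairing h1 v = 0" "pairing h2 v = 0" "pairing h3 v \<noteq> 0"
  shows "phi c (wedge h1 h2) = wedge (inverse (c * pairing h3 v) *s gcross h1 h2 h3) v"
proof -
  have "pairing h3 v * hodge (wedge h1 h2) $i$j = wedge (gcross h1 h2 h3) v $i$j" for i j
    using hodge_wedge_expansion[of h3 v h1 h2 i j] assms(2,3) by simp
  then show ?thesis
    using assms(1,4)
    by (simp add: phi_eq_hodge vec_eq_iff wedge_def vector_scalar_mult_def field_simps)
qed

lemma wedge22_gcross_wedge:
  "wedge22 (wedge (gcross h1 h2 h3) v3) (wedge v1 v2) =
     pairing h1 v1 * (pairing h2 v2 * pairing h3 v3 - pairing h2 v3 * pairing h3 v2)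
   - pairing h1 v2 * (pairing h2 v1 * pairing h3 v3 - pairing h2 v3 * pairing h3 v1)
   + pairing h1 v3 * (pairing h2 v1 * pairing h3 v2 - pairing h2 v2 * pairing h3 v1)"
  unfolding wedge22_def wedge_def gcross_def minor3_def pairing_def sum_4_from_0 by (simp; algebra)

lemma s2mul_commute: "s2mul A B = s2mul B A"
  unfolding s2mul_def by (auto simp: fun_eq_iff ac_simps)

lemma s2mul_wedge_scale: "s2mul (wedge (k *s v) w) B = s2scale k (s2mul (wedge v w) B)"
  unfolding s2mul_def s2scale_def wedge_def vector_scalar_mult_def
  by (auto simp: fun_eq_iff algebra_simps)

lemma s2scale_scale: "s2scale k (s2scale m X) = s2scale (k * m) X"
  unfolding s2scale_def by (simp add: fun_eq_iff mult.assoc)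

lemma s2add_scale: "s2add (s2scale k X) (s2scale k Y) = s2scale k (s2add X Y)"
  unfolding s2scale_def s2add_def by (simp add: fun_eq_iff distrib_left)

lemma ell_eq_gcross:
  assumes "c \<noteq> 0" "pairing h1 v3 = 0" "pairing h2 v3 = 0" "pairing h3 v3 \<noteq> 0"
  shows "ell c (v1, h1) (v2, h2) =
    s2scale (inverse (c * pairing h1 v1 * pairing h2 v2 * pairing h3 v3))
      (s2mul (wedge (gcross h1 h2 h3) v3) (wedge v1 v2))"
  unfolding ell_def fst_conv snd_conv phi_wedge_eq_gcross[OF assms]
  by (simp add: s2mul_commute[of "wedge v1 v2"] s2mul_wedge_scale s2scale_scale
      inverse_mult_distrib mult_ac)

lemma triangle_voltage:
  assumes "c \<noteq> 0"
    and n: "pairing h1 v1 \<noteq> 0" "pairing h2 v2 \<noteq> 0" "pairing h3 v3 \<noteq> 0"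
    and z: "pairing h1 v2 = 0" "pairing h2 v1 = 0" "pairing h2 v3 = 0"
      "pairing h3 v2 = 0" "pairing h3 v1 = 0" "pairing h1 v3 = 0"
  shows "s2add (s2add (ell c (v1, h1) (v2, h2)) (ell c (v2, h2) (v3, h3))) (ell c (v3, h3) (v1, h1))
    = s2scale (inverse c) Uelt_std"
proof -
  define K where "K = gcross h1 h2 h3"
  define k where "k = inverse (c * pairing h1 v1 * pairing h2 v2 * pairing h3 v3)"
  have "gcross h2 h3 h1 = K" "gcross h3 h1 h2 = K"
    unfolding K_def by (metis gcross_cycle)+
  then have "ell c (v1, h1) (v2, h2) = s2scale k (s2mul (wedge K v3) (wedge v1 v2))"
    "ell c (v2, h2) (v3, h3) = s2scale k (s2mul (wedge K v1) (wedge v2 v3))"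
    "ell c (v3, h3) (v1, h1) = s2scale k (s2mul (wedge K v2) (wedge v3 v1))"
    using ell_eq_gcross[of c h1 v3 h2 h3 v1 v2] ell_eq_gcross[of c h2 v1 h3 h1 v2 v3]
      ell_eq_gcross[of c h3 v2 h1 h2 v3 v1] assms
    by (simp_all add: K_def k_def mult_ac)
  then have "s2add (s2add (ell c (v1, h1) (v2, h2)) (ell c (v2, h2) (v3, h3))) (ell c (v3, h3) (v1, h1))
      = s2scale k (Uelt K v3 v1 v2)"
    by (simp add: Uelt_def s2add_scale)
  also have "\<dots> = s2scale (k * (pairing h1 v1 * pairing h2 v2 * pairing h3 v3)) Uelt_std"
    unfolding Uelt_eq_std K_def wedge22_gcross_wedge z s2scale_scale by (simp add: mult.assoc)
  also have "\<dots> = s2scale (inverse c) Uelt_std"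
    using n by (simp add: k_def field_simps)
  finally show ?thesis .
qed

theorem lemma3p8:
  fixes c :: "'f::field"
    and a b d :: "('f ^ 4) \<times> ('f ^ 4)"
  assumes "CHAR('f) = 2"
    and "c \<noteq> 0"
    and "is_vertex a" "is_vertex b" "is_vertex d"
    and "adj a b" "adj b d" "adj d a"
  shows "\<forall>w x y z :: 'f ^ 4. chi2 c (wedge w x) (wedge y z) = 1 \<longrightarrow>
           s2add (s2add (ell c a b) (ell c b d)) (ell c d a) = Uelt w x y z"
proof (intro allI impI)
  fix w x y z :: "'f ^ 4"
  assume "chi2 c (wedge w x) (wedge y z) = 1"
  then have U: "Uelt w x y z = s2scale (inverse c) Uelt_std"
    by (rule Uelt_eq_std_if_chi2)
  obtain v1 h1 v2 h2 v3 h3 where "a = (v1, h1)" "b = (v2, h2)" "d = (v3, h3)"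
    by (cases a, cases b, cases d) blast
  with assms(2-8) show "s2add (s2add (ell c a b) (ell c b d)) (ell c d a) = Uelt w x y z"
    unfolding U is_vertex_def adj_def by (simp add: triangle_voltage)
qed

end
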